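(* For a $d$-dimensional state ensemble $\Omega=\{(p_j,\rho_j)\}_{j=0}^{k-1}$, the optimal discrimination probability via DIO, $\widetilde{P}_{\mathrm{suc,DIO}}(\Omega)$, cannot be improved with the assistance of any coherent state, i.e. discriminating $\{(p_j,\rho_j\otimes\tau)\}_j$ via DIO for any ancillary state $\tau$ gives no higher success probability.
   Context: Let $\Delta(\rho)=\sum_i |i\rangle\langle i|\rho|i\rangle\langle i|$ be the completely dephasing channel in the computational basis. DIO (dephasing-covariant incoherent operations) are channels $\mathcal{E}$ with $\Delta\circ\mathcal{E}=\mathcal{E}\circ\Delta$. Quantum state discrimination via free operations $\mathcal{O}$: $\widetilde{P}_{\mathrm{suc},\mathcal{O}}(\Omega)=\sup\sum_j p_j\mathrm{tr}[\mathcal{N}_{A\to BA'}(\rho_j)(|j\rangle\langle j|_B\otimes I_{A'})]$ over $\mathcal{N}_{A\to BA'}\in\mathcal{O}$, $\dim B=k$, $A'\cong A$. *)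

theory Defs
  imports "Jordan_Normal_Form.Matrix"
begin

text \<open>The computational basis of a
  d-dimensional system is the standard basis indexed by 0..d-1; the tensor
  product of a system of dimension n with one of dimension m has basis index
  i*m + j for the pair (i,j) (Kronecker convention).\<close>

definition adj :: "complex mat \<Rightarrow> complex mat" where
  "adj A = mat (dim_col A) (dim_row A) (\<lambda>(i,j). cnj (A $$ (j,i)))"

definition tr :: "complex mat \<Rightarrow> complex" where
  "tr A = (\<Sum>i<dim_row A. A $$ (i,i))"

definition kron :: "complex mat \<Rightarrow> complex mat \<Rightarrow> complex mat" where
  "kron A B = mat (dim_row A * dim_row B) (dim_col A * dim_col B)
     (\<lambda>(i,j). A $$ (i div dim_row B, j div dim_col B) * B $$ (i mod dim_row B, j mod dim_col B))"

definition psd :: "nat \<Rightarrow> complex mat \<Rightarrow> bool" where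
  "psd n A \<longleftrightarrow> A \<in> carrier_mat n n
     \<and> (\<forall>i<n. \<forall>j<n. A $$ (i,j) = cnj (A $$ (j,i)))
     \<and> (\<forall>v \<in> carrier_vec n. 0 \<le> Re (\<Sum>i<n. \<Sum>j<n. cnj (v $ i) * A $$ (i,j) * v $ j))"

definition density :: "nat \<Rightarrow> complex mat \<Rightarrow> bool" where
  "density n \<rho> \<longleftrightarrow> psd n \<rho> \<and> tr \<rho> = 1"

definition msum :: "nat \<Rightarrow> nat \<Rightarrow> complex mat list \<Rightarrow> complex mat" where
  "msum r c As = foldr (+) As (0\<^sub>m r c)"

definition channel :: "nat \<Rightarrow> nat \<Rightarrow> (complex mat \<Rightarrow> complex mat) \<Rightarrow> bool" where
  "channel n m E \<longleftrightarrow> (\<exists>Ks. (\<forall>K \<in> set Ks. K \<in> carrier_mat m n)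
      \<and> msum n n (map (\<lambda>K. adj K * K) Ks) = 1\<^sub>m n
      \<and> (\<forall>X \<in> carrier_mat n n. E X = msum m m (map (\<lambda>K. K * X * adj K) Ks)))"

definition dephase :: "complex mat \<Rightarrow> complex mat" where
  "dephase A = mat (dim_row A) (dim_col A) (\<lambda>(i,j). if i = j then A $$ (i,j) else 0)"

definition DIO :: "nat \<Rightarrow> nat \<Rightarrow> (complex mat \<Rightarrow> complex mat) \<Rightarrow> bool" where
  "DIO n m E \<longleftrightarrow> channel n m E \<and> (\<forall>X \<in> carrier_mat n n. dephase (E X) = E (dephase X))"

definition proj :: "nat \<Rightarrow> nat \<Rightarrow> complex mat" where
  "proj k j = mat k k (\<lambda>(a,b). if a = j \<and> b = j then 1 else 0)"

definition ensemble :: "nat \<Rightarrow> nat \<Rightarrow> (nat \<Rightarrow> real) \<Rightarrow> (nat \<Rightarrow> complex mat) \<Rightarrow> bool" where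
  "ensemble d k p \<rho> \<longleftrightarrow> k \<ge> 1 \<and> (\<forall>j<k. 0 \<le> p j \<and> density d (\<rho> j)) \<and> (\<Sum>j<k. p j) = 1"

text \<open>Optimal success probability of discriminating the ensemble via DIO
  N : A \<rightarrow> B A', with dim A = dim A' = d and dim B = k (B is the first factor).\<close>
definition Psuc_DIO :: "nat \<Rightarrow> nat \<Rightarrow> (nat \<Rightarrow> real) \<Rightarrow> (nat \<Rightarrow> complex mat) \<Rightarrow> real" where
  "Psuc_DIO d k p \<rho> = Sup {(\<Sum>j<k. p j * Re (tr (N (\<rho> j) * kron (proj k j) (1\<^sub>m d))))
      | N. DIO d (k * d) N}"

end

theory Submission
  imports Defs
begin

text \<open>
  The success probability of a strategy \<open>N\<close> only sees the diagonal of the output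
  \<open>N (\<rho>\<^sub>j \<otimes> \<tau>)\<close>. For a DIO this diagonal is that of
  \<open>N (\<Delta> (\<rho>\<^sub>j \<otimes> \<tau>)) = N (\<Delta> \<rho>\<^sub>j \<otimes> \<Delta> \<tau>)\<close>, so the ancilla \<open>\<tau>\<close> may be replaced by the
  incoherent state \<open>\<Delta> \<tau>\<close>. Appending \<open>\<Delta> \<tau>\<close> (Kraus operators \<open>\<surd>\<tau>\<^sub>l\<^sub>l (I \<otimes> |l\<rangle>)\<close>) and
  tracing the ancilla out again are DIOs, and tracing out a factor of \<open>A'\<close> does not change the
  probabilities of the outcomes \<open>j\<close> read off from \<open>B\<close>. So \<open>N\<close> with ancilla \<open>\<tau>\<close> is matched by the
  DIO \<open>X \<mapsto> tr\<^sub>a\<^sub>n\<^sub>c (N (X \<otimes> \<Delta> \<tau>))\<close> acting on the ensemble itself.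
\<close>

lemma sum_lessThan_mult_nat:
  fixes g :: "nat \<Rightarrow> 'a::comm_monoid_add"
  shows "(\<Sum>c<n*m. g c) = (\<Sum>r<n. \<Sum>a<m. g (r*m + a))"
  by (simp add: sum.nat_group[symmetric] sum.atLeastLessThan_shift_0 atLeast0LessThan add.commute)

lemma mult_add_less_mult_nat: "(r::nat) < n \<Longrightarrow> a < m \<Longrightarrow> r*m + a < n*m"
proof -
  assume "r < n" "a < m"
  then have "r*m + a < Suc r * m" by simp
  also have "\<dots> \<le> n*m" using \<open>r < n\<close> by (intro mult_le_mono1) simp
  finally show ?thesis .
qed

lemma sum_if_eq_mult_add:
  fixes x n m a :: nat
  assumes x: "x < n*m" and a: "a < m"
  shows "(\<Sum>t<n. if x = t*m + a then f t else 0) = (if x mod m = a then f (x div m) else 0)"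
proof (cases "x mod m = a")
  case True
  have "x div m < n" using x by (rule less_mult_imp_div_less)
  moreover have "x = t*m + a \<longleftrightarrow> t = x div m" for t
    using True a by (metis div_mult_mod_eq add_right_cancel div_mult_self1 gr_implies_not0)
  ultimately show ?thesis using True by simp
next
  case False
  then have "x \<noteq> t*m + a" for t using a by auto
  then show ?thesis using False by simp
qed

lemma sum_list_sum_swap:
  "(\<Sum>x\<leftarrow>xs. \<Sum>y\<in>S. f x y) = (\<Sum>y\<in>S. \<Sum>x\<leftarrow>xs. f x y)"
  by (induction xs) (simp_all add: sum.distrib)

lemma sum_list_Re_nonneg: "(\<And>x. x \<in> set xs \<Longrightarrow> 0 \<le> Re (f x)) \<Longrightarrow> 0 \<le> Re (\<Sum>x\<leftarrow>xs. f x)"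
  by (induction xs) simp_all

lemma index_mult_mat_sum:
  "dim_col A = dim_row B \<Longrightarrow> i < dim_row A \<Longrightarrow> j < dim_col B \<Longrightarrow>
   (A * B) $$ (i,j) = (\<Sum>t<dim_row B. A $$ (i,t) * B $$ (t,j))"
  by (simp add: scalar_prod_def atLeast0LessThan)

lemma msum_eq_mat: "msum r c As = mat r c (\<lambda>(i,j). \<Sum>A\<leftarrow>As. A $$ (i,j))"
  by (induction As) (auto simp: msum_def)

lemma msum_Cons: "msum r c (A # As) = A + msum r c As"
  by (simp add: msum_def)

lemma dim_msum [simp]: "dim_row (msum r c As) = r" "dim_col (msum r c As) = c"
  by (simp_all add: msum_eq_mat)

lemma msum_carrier [simp]: "msum r c As \<in> carrier_mat r c"
  by (simp add: carrier_matI)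

lemma index_msum: "i < r \<Longrightarrow> j < c \<Longrightarrow> msum r c As $$ (i,j) = (\<Sum>A\<leftarrow>As. A $$ (i,j))"
  by (simp add: msum_eq_mat)

lemma mult_msum:
  assumes "A \<in> carrier_mat a r" "\<forall>B\<in>set Bs. B \<in> carrier_mat r c"
  shows "A * msum r c Bs = msum a c (map ((*) A) Bs)"
  using assms(2)
proof (induction Bs)
  case Nil
  show ?case by (simp add: msum_def right_mult_zero_mat[OF assms(1)])
next
  case (Cons B Bs)
  then show ?case by (simp add: msum_Cons mult_add_distrib_mat[OF assms(1) _ msum_carrier])
qed

lemma msum_mult:
  assumes "B \<in> carrier_mat c c'" "\<forall>A\<in>set As. A \<in> carrier_mat r c"
  shows "msum r c As * B = msum r c' (map (\<lambda>A. A * B) As)"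
  using assms(2)
proof (induction As)
  case Nil
  show ?case by (simp add: msum_def left_mult_zero_mat[OF assms(1)])
next
  case (Cons A As)
  then show ?case by (simp add: msum_Cons add_mult_distrib_mat[OF _ msum_carrier assms(1)])
qed

lemma msum_concat: "msum r c (concat Ass) = msum r c (map (msum r c) Ass)"
proof (rule eq_matI)
  fix i j assume "i < dim_row (msum r c (map (msum r c) Ass))" "j < dim_col (msum r c (map (msum r c) Ass))"
  then have "i < r" "j < c" by simp_all
  then show "msum r c (concat Ass) $$ (i,j) = msum r c (map (msum r c) Ass) $$ (i,j)"
    by (induction Ass) (simp_all add: index_msum)
qed simp_all

lemma mult_msum_mult:
  assumes "A \<in> carrier_mat a r" "B \<in> carrier_mat c b" "\<forall>M\<in>set Ms. M \<in> carrier_mat r c"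
  shows "A * msum r c Ms * B = msum a b (map (\<lambda>M. A * M * B) Ms)"
proof -
  have "A * msum r c Ms * B = msum a c (map ((*) A) Ms) * B"
    by (simp only: mult_msum[OF assms(1,3)])
  also have "\<dots> = msum a b (map (\<lambda>M. M * B) (map ((*) A) Ms))"
    using assms by (intro msum_mult) auto
  finally show ?thesis by (simp add: o_def)
qed

lemma msum_swap:
  "msum r c (map (\<lambda>x. msum r c (map (f x) ys)) xs)
    = msum r c (map (\<lambda>y. msum r c (map (\<lambda>x. f x y) xs)) ys)"
proof -
  have "(\<Sum>x\<leftarrow>xs. \<Sum>y\<leftarrow>ys. g x y) = (\<Sum>y\<leftarrow>ys. \<Sum>x\<leftarrow>xs. g x y)" for g :: "_ \<Rightarrow> _ \<Rightarrow> complex"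
    by (induction xs) (simp_all add: sum_list_addf)
  then show ?thesis by (intro eq_matI) (simp_all add: index_msum o_def)
qed

lemma dim_adj [simp]: "dim_row (adj A) = dim_col A" "dim_col (adj A) = dim_row A"
  by (simp_all add: adj_def)

lemma adj_carrier [simp]: "A \<in> carrier_mat a b \<Longrightarrow> adj A \<in> carrier_mat b a"
  by (simp add: adj_def)

lemma index_adj [simp]: "i < dim_col A \<Longrightarrow> j < dim_row A \<Longrightarrow> adj A $$ (i,j) = cnj (A $$ (j,i))"
  by (simp add: adj_def)

lemma adj_mult:
  assumes "A \<in> carrier_mat a b" "B \<in> carrier_mat b c"
  shows "adj (A * B) = adj B * adj A"
  using assms by (intro eq_matI) (auto simp: index_mult_mat_sum mult.commute simp del: index_mult_mat(1))

lemma adj_adj [simp]: "adj (adj A) = A"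
  by (intro eq_matI) simp_all

lemma adj_smult: "adj (x \<cdot>\<^sub>m A) = cnj x \<cdot>\<^sub>m adj A"
  by (intro eq_matI) simp_all

lemma sandwich_carrier: "K \<in> carrier_mat m n \<Longrightarrow> X \<in> carrier_mat n n \<Longrightarrow> K * X * adj K \<in> carrier_mat m m"
  by (metis mult_carrier_mat adj_carrier)

lemma mult_sandwich_mult:
  assumes G: "G \<in> carrier_mat l m" and K: "K \<in> carrier_mat m n" and X: "X \<in> carrier_mat n n"
  shows "G * (K * X * adj K) * adj G = G * K * X * adj (G * K)"
proof -
  have KX: "K * X \<in> carrier_mat m n" using K X by simp
  have KXK: "K * X * adj K \<in> carrier_mat m m" using KX K by simp
  have "G * (K * X * adj K) * adj G = G * (K * X * adj K * adj G)"
    by (rule assoc_mult_mat[OF G KXK adj_carrier[OF G]])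
  also have "K * X * adj K * adj G = K * X * (adj K * adj G)"
    by (rule assoc_mult_mat[OF KX adj_carrier[OF K] adj_carrier[OF G]])
  also have "G * (K * X * (adj K * adj G)) = G * (K * X) * (adj K * adj G)"
    by (rule assoc_mult_mat[OF G KX mult_carrier_mat[OF adj_carrier[OF K] adj_carrier[OF G]], symmetric])
  also have "G * (K * X) = G * K * X"
    by (rule assoc_mult_mat[OF G K X, symmetric])
  finally show ?thesis by (simp add: adj_mult[OF G K])
qed

lemma adj_mult_mult:
  assumes G: "G \<in> carrier_mat l m" and K: "K \<in> carrier_mat m n"
  shows "adj (G * K) * (G * K) = adj K * (adj G * G) * K"
  by (simp add: adj_mult[OF G K] assoc_mult_mat[OF adj_carrier[OF K] adj_carrier[OF G]
      mult_carrier_mat[OF G K]]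
      assoc_mult_mat[OF adj_carrier[OF K] mult_carrier_mat[OF adj_carrier[OF G] G] K]
      assoc_mult_mat[OF adj_carrier[OF G] G K])

lemma smult_sandwich:
  assumes A: "A \<in> carrier_mat r c" and X: "X \<in> carrier_mat c c"
  shows "(z \<cdot>\<^sub>m A) * X * adj (z \<cdot>\<^sub>m A) = (z * cnj z) \<cdot>\<^sub>m (A * X * adj A)"
proof -
  have AX: "A * X \<in> carrier_mat r c" using A X by simp
  have "(z \<cdot>\<^sub>m A) * X * adj (z \<cdot>\<^sub>m A) = z \<cdot>\<^sub>m (A * X * (cnj z \<cdot>\<^sub>m adj A))"
    by (simp add: adj_smult mult_smult_assoc_mat[OF A X]
        mult_smult_assoc_mat[OF AX smult_carrier_mat[OF adj_carrier[OF A]]])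
  also have "\<dots> = z \<cdot>\<^sub>m (cnj z \<cdot>\<^sub>m (A * X * adj A))"
    by (simp add: mult_smult_distrib[OF AX adj_carrier[OF A]])
  finally show ?thesis by (intro eq_matI) auto
qed

lemma adj_smult_mult_smult: "adj (z \<cdot>\<^sub>m A) * (z \<cdot>\<^sub>m A) = (cnj z * z) \<cdot>\<^sub>m (adj A * A)"
  by (intro eq_matI)
    (auto simp: adj_smult index_mult_mat_sum sum_distrib_left mult_ac simp del: index_mult_mat(1))

lemma tr_mult_comm:
  assumes "A \<in> carrier_mat n m" "B \<in> carrier_mat m n"
  shows "tr (A * B) = tr (B * A)"
proof -
  have "tr (A * B) = (\<Sum>i<n. \<Sum>t<m. A $$ (i,t) * B $$ (t,i))"
    using assms by (simp add: tr_def index_mult_mat_sum del: index_mult_mat(1))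
  also have "\<dots> = (\<Sum>t<m. \<Sum>i<n. B $$ (t,i) * A $$ (i,t))"
    by (subst sum.swap) (simp add: mult.commute)
  also have "\<dots> = tr (B * A)"
    using assms by (simp add: tr_def index_mult_mat_sum del: index_mult_mat(1))
  finally show ?thesis .
qed

lemma tr_msum:
  assumes "\<forall>A\<in>set As. A \<in> carrier_mat n n"
  shows "tr (msum n n As) = (\<Sum>A\<leftarrow>As. tr A)"
proof -
  have "tr (msum n n As) = (\<Sum>A\<leftarrow>As. \<Sum>i<n. A $$ (i,i))"
    by (simp add: tr_def index_msum sum_list_sum_swap)
  also have "\<dots> = (\<Sum>A\<leftarrow>As. tr A)"
    using assms by (intro arg_cong[where f = sum_list] map_cong) (auto simp: tr_def)
  finally show ?thesis .
qed

section \<open>Channels\<close>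

lemma channel_carrier: "channel n m E \<Longrightarrow> X \<in> carrier_mat n n \<Longrightarrow> E X \<in> carrier_mat m m"
  unfolding channel_def by (metis msum_carrier)

lemma channel_comp:
  assumes E: "channel n m E" and F: "channel m l F"
  shows "channel n l (F \<circ> E)"
proof -
  obtain Ks where Ks: "\<forall>K\<in>set Ks. K \<in> carrier_mat m n"
    and Ks_id: "msum n n (map (\<lambda>K. adj K * K) Ks) = 1\<^sub>m n"
    and E_eq: "\<forall>X\<in>carrier_mat n n. E X = msum m m (map (\<lambda>K. K * X * adj K) Ks)"
    using E unfolding channel_def by blast
  obtain Gs where Gs: "\<forall>G\<in>set Gs. G \<in> carrier_mat l m"
    and Gs_id: "msum m m (map (\<lambda>G. adj G * G) Gs) = 1\<^sub>m m"
    and F_eq: "\<forall>Y\<in>carrier_mat m m. F Y = msum l l (map (\<lambda>G. G * Y * adj G) Gs)"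
    using F unfolding channel_def by blast
  define Ls where "Ls = concat (map (\<lambda>G. map (\<lambda>K. G * K) Ks) Gs)"
  have "\<forall>L\<in>set Ls. L \<in> carrier_mat l n"
    using Ks Gs by (auto simp: Ls_def)
  moreover have "msum n n (map (\<lambda>L. adj L * L) Ls) = 1\<^sub>m n"
  proof -
    have "msum n n (map (\<lambda>L. adj L * L) Ls)
        = msum n n (map (\<lambda>G. msum n n (map (\<lambda>K. adj (G * K) * (G * K)) Ks)) Gs)"
      by (simp only: Ls_def msum_concat map_concat map_map o_def)
    also have "\<dots> = msum n n (map (\<lambda>K. msum n n (map (\<lambda>G. adj (G * K) * (G * K)) Gs)) Ks)"
      by (rule msum_swap)
    also have "\<dots> = msum n n (map (\<lambda>K. adj K * K) Ks)"
    proof (intro arg_cong[where f = "msum n n"] map_cong refl)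
      fix K assume "K \<in> set Ks"
      then have K: "K \<in> carrier_mat m n" using Ks by blast
      have GG: "\<forall>A\<in>set (map (\<lambda>G. adj G * G) Gs). A \<in> carrier_mat m m"
        using Gs by (auto intro!: mult_carrier_mat[OF adj_carrier])
      have "adj K * K = adj K * msum m m (map (\<lambda>G. adj G * G) Gs) * K"
        using K by (simp add: Gs_id)
      also have "\<dots> = msum n n (map (\<lambda>G. adj K * (adj G * G) * K) Gs)"
        by (simp only: mult_msum_mult[OF adj_carrier[OF K] K GG] map_map o_def)
      also have "\<dots> = msum n n (map (\<lambda>G. adj (G * K) * (G * K)) Gs)"
        using Gs by (intro arg_cong[where f = "msum n n"] map_cong refl adj_mult_mult[OF _ K, symmetric]) auto
      finally show "msum n n (map (\<lambda>G. adj (G * K) * (G * K)) Gs) = adj K * K" ..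
    qed
    finally show ?thesis using Ks_id by simp
  qed
  moreover have "(F \<circ> E) X = msum l l (map (\<lambda>L. L * X * adj L) Ls)" if X: "X \<in> carrier_mat n n" for X
  proof -
    have KXK: "\<forall>A\<in>set (map (\<lambda>K. K * X * adj K) Ks). A \<in> carrier_mat m m"
      using Ks X by (auto intro: sandwich_carrier)
    have "(F \<circ> E) X = msum l l (map (\<lambda>G. G * msum m m (map (\<lambda>K. K * X * adj K) Ks) * adj G) Gs)"
      using X by (simp add: E_eq F_eq)
    also have "\<dots> = msum l l (map (\<lambda>G. msum l l (map (\<lambda>K. G * K * X * adj (G * K)) Ks)) Gs)"
    proof (intro arg_cong[where f = "msum l l"] map_cong refl)
      fix G assume "G \<in> set Gs"
      then have G: "G \<in> carrier_mat l m" using Gs by blast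
      have "G * msum m m (map (\<lambda>K. K * X * adj K) Ks) * adj G
          = msum l l (map (\<lambda>K. G * (K * X * adj K) * adj G) Ks)"
        by (simp only: mult_msum_mult[OF G adj_carrier[OF G] KXK] map_map o_def)
      also have "\<dots> = msum l l (map (\<lambda>K. G * K * X * adj (G * K)) Ks)"
        using Ks by (intro arg_cong[where f = "msum l l"] map_cong refl mult_sandwich_mult[OF G _ X]) auto
      finally show "G * msum m m (map (\<lambda>K. K * X * adj K) Ks) * adj G
          = msum l l (map (\<lambda>K. G * K * X * adj (G * K)) Ks)" .
    qed
    also have "\<dots> = msum l l (map (\<lambda>L. L * X * adj L) Ls)"
      by (simp only: Ls_def msum_concat map_concat map_map o_def)
    finally show ?thesis .
  qed
  ultimately show ?thesis unfolding channel_def by blast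
qed

lemma channel_trace:
  assumes E: "channel n m E" and X: "X \<in> carrier_mat n n"
  shows "tr (E X) = tr X"
proof -
  obtain Ks where Ks: "\<forall>K\<in>set Ks. K \<in> carrier_mat m n"
    and Ks_id: "msum n n (map (\<lambda>K. adj K * K) Ks) = 1\<^sub>m n"
    and E_eq: "\<forall>Y\<in>carrier_mat n n. E Y = msum m m (map (\<lambda>K. K * Y * adj K) Ks)"
    using E unfolding channel_def by blast
  have KK: "\<forall>A\<in>set (map (\<lambda>K. adj K * K) Ks). A \<in> carrier_mat n n"
    using Ks by (auto intro!: mult_carrier_mat[OF adj_carrier])
  have KXK: "\<forall>A\<in>set (map (\<lambda>K. K * X * adj K) Ks). A \<in> carrier_mat m m"
    using Ks X by (auto intro: sandwich_carrier)
  have KKX: "\<forall>A\<in>set (map (\<lambda>K. adj K * K * X) Ks). A \<in> carrier_mat n n"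
    using Ks X by (auto intro!: mult_carrier_mat[OF mult_carrier_mat[OF adj_carrier]])
  have cyc: "tr (K * X * adj K) = tr (adj K * K * X)" if "K \<in> set Ks" for K
  proof -
    have K: "K \<in> carrier_mat m n" using that Ks by blast
    have "tr (K * X * adj K) = tr (adj K * (K * X))"
      by (rule tr_mult_comm[OF mult_carrier_mat[OF K X] adj_carrier[OF K]])
    also have "adj K * (K * X) = adj K * K * X"
      by (rule assoc_mult_mat[OF adj_carrier[OF K] K X, symmetric])
    finally show ?thesis .
  qed
  have "tr (E X) = (\<Sum>K\<leftarrow>Ks. tr (K * X * adj K))"
    by (simp only: E_eq[rule_format, OF X] tr_msum[OF KXK] map_map o_def)
  also have "\<dots> = (\<Sum>K\<leftarrow>Ks. tr (adj K * K * X))"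
    using cyc by (intro arg_cong[where f = sum_list] map_cong) auto
  also have "\<dots> = tr (msum n n (map (\<lambda>K. adj K * K) Ks) * X)"
    by (simp only: msum_mult[OF X KK] map_map o_def tr_msum[OF KKX])
  finally show ?thesis using X by (simp add: Ks_id)
qed

lemma psd_carrier: "psd n A \<Longrightarrow> A \<in> carrier_mat n n"
  unfolding psd_def by blast

lemma density_carrier: "density n A \<Longrightarrow> A \<in> carrier_mat n n"
  by (simp add: density_def psd_carrier)

lemma sandwich_diag_nonneg:
  assumes X: "psd n X" and K: "K \<in> carrier_mat m n" and i: "i < m"
  shows "0 \<le> Re ((K * X * adj K) $$ (i,i))"
proof -
  define v where "v = vec n (\<lambda>u. cnj (K $$ (i,u)))"
  have "v \<in> carrier_vec n" by (simp add: v_def)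
  then have "0 \<le> Re (\<Sum>u<n. \<Sum>w<n. cnj (v $ u) * X $$ (u,w) * v $ w)"
    using X unfolding psd_def by blast
  also have "(\<Sum>u<n. \<Sum>w<n. cnj (v $ u) * X $$ (u,w) * v $ w)
      = (\<Sum>w<n. \<Sum>u<n. K $$ (i,u) * X $$ (u,w) * cnj (K $$ (i,w)))"
    by (subst sum.swap) (simp add: v_def)
  also have "\<dots> = (K * X * adj K) $$ (i,i)"
  proof -
    show ?thesis
      using psd_carrier[OF X] K i by (simp add: index_mult_mat_sum sum_distrib_right del:
          index_mult_mat(1))
  qed
  finally show ?thesis .
qed

lemma channel_diag_nonneg:
  assumes E: "channel n m E" and X: "psd n X" and i: "i < m"
  shows "0 \<le> Re (E X $$ (i,i))"
proof -
  have X_carrier: "X \<in> carrier_mat n n" using psd_carrier[OF X] .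
  obtain Ks where Ks: "\<forall>K\<in>set Ks. K \<in> carrier_mat m n"
    and E_eq: "\<forall>Y\<in>carrier_mat n n. E Y = msum m m (map (\<lambda>K. K * Y * adj K) Ks)"
    using E unfolding channel_def by blast
  have "0 \<le> Re (\<Sum>K\<leftarrow>Ks. (K * X * adj K) $$ (i,i))"
    using Ks by (intro sum_list_Re_nonneg sandwich_diag_nonneg[OF X _ i]) blast
  then show ?thesis using i by (simp add: E_eq[rule_format, OF X_carrier] index_msum o_def)
qed

lemma psd_diag_real:
  assumes "psd n A" "i < n"
  shows "A $$ (i,i) = of_real (Re (A $$ (i,i)))"
proof -
  have "A $$ (i,i) = cnj (A $$ (i,i))" using assms unfolding psd_def by blast
  then have "Im (A $$ (i,i)) = 0" by (metis cnj.sel(2) neg_equal_zero)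
  then show ?thesis by (simp add: complex_eq_iff)
qed

lemma psd_diag_nonneg:
  assumes "psd n A" "i < n"
  shows "0 \<le> Re (A $$ (i,i))"
proof -
  have A: "A \<in> carrier_mat n n" using psd_carrier[OF assms(1)] .
  have "adj (1\<^sub>m n) = 1\<^sub>m n" by (intro eq_matI) auto
  then show ?thesis
    using sandwich_diag_nonneg[OF assms(1) one_carrier_mat assms(2)] A by simp
qed

section \<open>Dephasing\<close>

lemma dim_dephase [simp]: "dim_row (dephase A) = dim_row A" "dim_col (dephase A) = dim_col A"
  by (simp_all add: dephase_def)

lemma dephase_carrier [simp]: "A \<in> carrier_mat r c \<Longrightarrow> dephase A \<in> carrier_mat r c"
  by (simp add: dephase_def)

lemma index_dephase [simp]:
  "i < dim_row A \<Longrightarrow> j < dim_col A \<Longrightarrow> dephase A $$ (i,j) = (if i = j then A $$ (i,j) else 0)"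
  by (simp add: dephase_def)

lemma dephase_idem [simp]: "dephase (dephase A) = dephase A"
  by (intro eq_matI) simp_all

lemma dim_kron [simp]:
  "dim_row (kron A B) = dim_row A * dim_row B" "dim_col (kron A B) = dim_col A * dim_col B"
  by (simp_all add: kron_def)

lemma kron_carrier [simp]:
  "A \<in> carrier_mat a b \<Longrightarrow> B \<in> carrier_mat c e \<Longrightarrow> kron A B \<in> carrier_mat (a*c) (b*e)"
  by (simp add: kron_def)

lemma index_kron [simp]:
  "i < dim_row A * dim_row B \<Longrightarrow> j < dim_col A * dim_col B \<Longrightarrow>
   kron A B $$ (i,j) = A $$ (i div dim_row B, j div dim_col B) * B $$ (i mod dim_row B, j mod dim_col B)"
  by (simp add: kron_def)

lemma dephase_kron:
  assumes A: "A \<in> carrier_mat n n" and B: "B \<in> carrier_mat m m"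
  shows "dephase (kron A B) = kron (dephase A) (dephase B)"
proof (rule eq_matI)
  fix i j assume "i < dim_row (kron (dephase A) (dephase B))" "j < dim_col (kron (dephase A) (dephase B))"
  then have ij: "i < n*m" "j < n*m" using A B by auto
  then have "0 < m" by (cases m) auto
  have "i = j \<longleftrightarrow> i div m = j div m \<and> i mod m = j mod m"
    by (metis div_mult_mod_eq)
  moreover have "i div m < n" "j div m < n" "i mod m < m" "j mod m < m"
    using ij \<open>0 < m\<close> by (auto simp: less_mult_imp_div_less)
  ultimately show "dephase (kron A B) $$ (i,j) = kron (dephase A) (dephase B) $$ (i,j)"
    using A B ij by auto
qed (use A B in auto)

lemma DIO_comp:
  assumes E: "DIO n m E" and F: "DIO m l F"
  shows "DIO n l (F \<circ> E)"
proof -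
  have "dephase (F (E X)) = F (E (dephase X))" if X: "X \<in> carrier_mat n n" for X
  proof -
    have EX: "E X \<in> carrier_mat m m" using E X unfolding DIO_def by (blast intro: channel_carrier)
    have "dephase (F (E X)) = F (dephase (E X))" using F EX by (simp add: DIO_def)
    also have "dephase (E X) = E (dephase X)" using E X by (simp add: DIO_def)
    finally show ?thesis .
  qed
  moreover have "channel n l (F \<circ> E)"
    using E F unfolding DIO_def by (blast intro: channel_comp)
  ultimately show ?thesis unfolding DIO_def by simp
qed

section \<open>Partial trace and incoherent ancillas\<close>

definition partial_trace :: "nat \<Rightarrow> nat \<Rightarrow> complex mat \<Rightarrow> complex mat" where
  "partial_trace n m Y = mat n n (\<lambda>(i,j). \<Sum>a<m. Y $$ (i*m + a, j*m + a))"

text \<open>\<open>partial_trace_kraus n m a\<close> is \<open>I\<^sub>n \<otimes> \<langle>a|\<close> in the index convention of \<open>kron\<close>;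
  its adjoint \<open>I\<^sub>n \<otimes> |a\<rangle>\<close> appends the basis state \<open>a\<close> of the ancilla.\<close>

definition partial_trace_kraus :: "nat \<Rightarrow> nat \<Rightarrow> nat \<Rightarrow> complex mat" where
  "partial_trace_kraus n m a = mat n (n*m) (\<lambda>(r,c). if c = r*m + a then 1 else 0)"

lemma dim_partial_trace_kraus [simp]:
  "dim_row (partial_trace_kraus n m a) = n" "dim_col (partial_trace_kraus n m a) = n*m"
  by (simp_all add: partial_trace_kraus_def)

lemma partial_trace_kraus_carrier [simp]: "partial_trace_kraus n m a \<in> carrier_mat n (n*m)"
  by (simp add: carrier_matI)

lemma partial_trace_kraus_mult:
  assumes "M \<in> carrier_mat (n*m) c" "a < m"
  shows "partial_trace_kraus n m a * M = mat n c (\<lambda>(r,j). M $$ (r*m + a, j))"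
  using assms mult_add_less_mult_nat[OF _ assms(2)]
  by (intro eq_matI) (simp_all add: index_mult_mat_sum partial_trace_kraus_def
      if_distrib[of "\<lambda>x. x * _"] del: index_mult_mat(1) cong: if_cong)

lemma mult_adj_partial_trace_kraus:
  assumes "M \<in> carrier_mat r (n*m)" "a < m"
  shows "M * adj (partial_trace_kraus n m a) = mat r n (\<lambda>(i,j). M $$ (i, j*m + a))"
  using assms mult_add_less_mult_nat[OF _ assms(2)]
  by (intro eq_matI) (simp_all add: index_mult_mat_sum partial_trace_kraus_def if_distrib[of cnj]
      if_distrib[of "\<lambda>x. _ * x"] del: index_mult_mat(1) cong: if_cong)

lemma adj_partial_trace_kraus_mult:
  assumes X: "X \<in> carrier_mat n c" and a: "a < m"
  shows "adj (partial_trace_kraus n m a) * X = mat (n*m) c (\<lambda>(x,j). if x mod m = a then X $$ (x div m, j) else 0)"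
proof (rule eq_matI)
  fix x j assume "x < dim_row (mat (n*m) c (\<lambda>(x,j). if x mod m = a then X $$ (x div m, j) else 0))"
    "j < dim_col (mat (n*m) c (\<lambda>(x,j). if x mod m = a then X $$ (x div m, j) else 0))"
  then have x: "x < n*m" and j: "j < c" by simp_all
  have "(adj (partial_trace_kraus n m a) * X) $$ (x,j) = (\<Sum>t<n. if x = t*m + a then X $$ (t,j) else 0)"
    using X x j by (simp add: index_mult_mat_sum partial_trace_kraus_def if_distrib[of cnj]
        if_distrib[of "\<lambda>x. x * _"]
        del: index_mult_mat(1) cong: if_cong)
  also have "\<dots> = (if x mod m = a then X $$ (x div m, j) else 0)"
    by (rule sum_if_eq_mult_add[OF x a])
  finally show "(adj (partial_trace_kraus n m a) * X) $$ (x,j)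
      = mat (n*m) c (\<lambda>(x,j). if x mod m = a then X $$ (x div m, j) else 0) $$ (x,j)"
    using x j by simp
qed (use X in simp_all)

lemma mult_partial_trace_kraus:
  assumes Z: "Z \<in> carrier_mat r n" and a: "a < m"
  shows "Z * partial_trace_kraus n m a = mat r (n*m) (\<lambda>(i,y). if y mod m = a then Z $$ (i, y div m) else 0)"
proof -
  have "Z * partial_trace_kraus n m a = adj (adj (partial_trace_kraus n m a) * adj Z)"
    by (simp add: adj_mult[OF adj_carrier[OF partial_trace_kraus_carrier] adj_carrier[OF Z]])
  also have "\<dots> = mat r (n*m) (\<lambda>(i,y). if y mod m = a then Z $$ (i, y div m) else 0)"
    using Z by (intro eq_matI) (auto simp: adj_partial_trace_kraus_mult[OF adj_carrier[OF Z] a]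
        less_mult_imp_div_less)
  finally show ?thesis .
qed

lemma partial_trace_kraus_mult_adj:
  "a < m \<Longrightarrow> partial_trace_kraus n m a * adj (partial_trace_kraus n m a) = 1\<^sub>m n"
  by (simp add: mult_adj_partial_trace_kraus[OF partial_trace_kraus_carrier])
    (intro eq_matI, auto simp: partial_trace_kraus_def mult_add_less_mult_nat)

lemma adj_partial_trace_kraus_sandwich:
  assumes X: "X \<in> carrier_mat n n" and a: "a < m"
  shows "adj (partial_trace_kraus n m a) * X * partial_trace_kraus n m a
    = mat (n*m) (n*m) (\<lambda>(x,y). if x mod m = a \<and> y mod m = a then X $$ (x div m, y div m) else 0)"
  by (intro eq_matI) (auto simp: adj_partial_trace_kraus_mult[OF X a] mult_partial_trace_kraus[OF
      mat_carrier a] less_mult_imp_div_less)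

lemma channel_partial_trace: "channel (n*m) n (partial_trace n m)"
  unfolding channel_def
proof (intro exI[of _ "map (partial_trace_kraus n m) [0..<m]"] conjI ballI)
  show "K \<in> carrier_mat n (n*m)" if "K \<in> set (map (partial_trace_kraus n m) [0..<m])" for K
    using that by auto
  show "msum (n*m) (n*m) (map (\<lambda>K. adj K * K) (map (partial_trace_kraus n m) [0..<m])) = 1\<^sub>m (n*m)"
  proof (rule eq_matI)
    fix x y assume "x < dim_row (1\<^sub>m (n*m) :: complex mat)" "y < dim_col (1\<^sub>m (n*m) :: complex mat)"
    then have x: "x < n*m" and y: "y < n*m" by simp_all
    then have "0 < m" by (cases m) auto
    have "msum (n*m) (n*m) (map (\<lambda>K. adj K * K) (map (partial_trace_kraus n m) [0..<m])) $$ (x,y)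
        = (\<Sum>a<m. (adj (partial_trace_kraus n m a) * partial_trace_kraus n m a) $$ (x,y))"
      using x y by (simp add: index_msum sum_list_sum_nth atLeast0LessThan del: index_mult_mat(1))
    also have "\<dots> = (\<Sum>a<m. if x mod m = a then partial_trace_kraus n m a $$ (x div m, y) else 0)"
      using x y by (intro sum.cong) (simp_all add: adj_partial_trace_kraus_mult[OF
          partial_trace_kraus_carrier])
    also have "\<dots> = partial_trace_kraus n m (x mod m) $$ (x div m, y)"
      using \<open>0 < m\<close> by simp
    also have "\<dots> = (if x = y then 1 else 0)"
      using x y by (auto simp: partial_trace_kraus_def less_mult_imp_div_less)
    finally show "msum (n*m) (n*m) (map (\<lambda>K. adj K * K) (map (partial_trace_kraus n m) [0..<m])) $$ (x,y)
        = 1\<^sub>m (n*m) $$ (x,y)"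
      using x y by simp
  qed simp_all
  fix Y :: "complex mat" assume Y: "Y \<in> carrier_mat (n*m) (n*m)"
  show "partial_trace n m Y = msum n n (map (\<lambda>K. K * Y * adj K) (map (partial_trace_kraus n m) [0..<m]))"
  proof (rule eq_matI)
    fix i j assume "i < dim_row (msum n n (map (\<lambda>K. K * Y * adj K) (map (partial_trace_kraus n m) [0..<m])))"
      "j < dim_col (msum n n (map (\<lambda>K. K * Y * adj K) (map (partial_trace_kraus n m) [0..<m])))"
    then have ij: "i < n" "j < n" by simp_all
    have "(partial_trace_kraus n m a * Y * adj (partial_trace_kraus n m a)) $$ (i,j) = Y $$ (i*m + a, j*m + a)"
      if "a < m" for a
      using ij mult_add_less_mult_nat[OF ij(2) that]
      by (simp add: partial_trace_kraus_mult[OF Y that] mult_adj_partial_trace_kraus[OF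
          mat_carrier that])
    then show "partial_trace n m Y $$ (i,j)
        = msum n n (map (\<lambda>K. K * Y * adj K) (map (partial_trace_kraus n m) [0..<m])) $$ (i,j)"
      using ij by (simp add: partial_trace_def index_msum sum_list_sum_nth atLeast0LessThan
          del: index_mult_mat(1))
  qed (simp_all add: partial_trace_def)
qed

lemma dephase_partial_trace:
  assumes "Y \<in> carrier_mat (n*m) (n*m)"
  shows "dephase (partial_trace n m Y) = partial_trace n m (dephase Y)"
  using assms mult_add_less_mult_nat
  by (intro eq_matI) (auto simp: partial_trace_def intro!: sum.cong)

lemma DIO_partial_trace: "DIO (n*m) n (partial_trace n m)"
  unfolding DIO_def using channel_partial_trace dephase_partial_trace by blast

lemma channel_append_dephased:
  assumes \<tau>: "density m \<tau>"
  shows "channel d (d*m) (\<lambda>X. kron X (dephase \<tau>))"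
proof -
  define s where "s l = Re (\<tau> $$ (l,l))" for l
  define c where "c l = complex_of_real (sqrt (s l))" for l
  have psd: "psd m \<tau>" using \<tau> by (simp add: density_def)
  have \<tau>_carrier: "\<tau> \<in> carrier_mat m m" using density_carrier[OF \<tau>] .
  have s_nonneg: "0 \<le> s l" if "l < m" for l
    using psd_diag_nonneg[OF psd that] by (simp add: s_def)
  have \<tau>_diag: "\<tau> $$ (l,l) = of_real (s l)" if "l < m" for l
    using psd_diag_real[OF psd that] by (simp add: s_def)
  have c_sq: "c l * cnj (c l) = of_real (s l)" "cnj (c l) * c l = of_real (s l)" if "l < m" for l
    using s_nonneg[OF that] by (simp_all add: c_def flip: of_real_mult)
  have "(\<Sum>l<m. complex_of_real (s l)) = 1"
    using \<tau> \<tau>_carrier \<tau>_diag by (simp add: density_def tr_def)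
  then have s_sum: "(\<Sum>l<m. s l) = 1"
    by (metis of_real_eq_1_iff of_real_sum)
  define Ks where "Ks = map (\<lambda>l. c l \<cdot>\<^sub>m adj (partial_trace_kraus d m l)) [0..<m]"
  have "\<forall>K\<in>set Ks. K \<in> carrier_mat (d*m) d"
    by (auto simp: Ks_def)
  moreover have "msum d d (map (\<lambda>K. adj K * K) Ks) = 1\<^sub>m d"
  proof (rule eq_matI)
    fix i j assume "i < dim_row (1\<^sub>m d :: complex mat)" "j < dim_col (1\<^sub>m d :: complex mat)"
    then have ij: "i < d" "j < d" by simp_all
    have "msum d d (map (\<lambda>K. adj K * K) Ks) $$ (i,j) = (\<Sum>l<m. of_real (s l) * 1\<^sub>m d $$ (i,j))"
      using ij by (simp add: Ks_def index_msum sum_list_sum_nth atLeast0LessThan adj_smult_mult_smult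
          partial_trace_kraus_mult_adj c_sq del: index_mult_mat(1))
    also have "\<dots> = 1\<^sub>m d $$ (i,j)"
      by (simp add: sum_distrib_right[symmetric] s_sum flip: of_real_sum)
    finally show "msum d d (map (\<lambda>K. adj K * K) Ks) $$ (i,j) = 1\<^sub>m d $$ (i,j)" .
  qed simp_all
  moreover have "kron X (dephase \<tau>) = msum (d*m) (d*m) (map (\<lambda>K. K * X * adj K) Ks)"
    if X: "X \<in> carrier_mat d d" for X
  proof (rule eq_matI)
    fix x y assume "x < dim_row (msum (d*m) (d*m) (map (\<lambda>K. K * X * adj K) Ks))"
      "y < dim_col (msum (d*m) (d*m) (map (\<lambda>K. K * X * adj K) Ks))"
    then have xy: "x < d*m" "y < d*m" by simp_all
    then have "0 < m" by (cases m) auto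
    then have xy_mod: "x mod m < m" "y mod m < m" by simp_all
    have "msum (d*m) (d*m) (map (\<lambda>K. K * X * adj K) Ks) $$ (x,y)
        = (\<Sum>l<m. of_real (s l) * (if x mod m = l \<and> y mod m = l then X $$ (x div m, y div m) else 0))"
      using xy X by (simp add: Ks_def index_msum sum_list_sum_nth atLeast0LessThan
          smult_sandwich[OF adj_carrier[OF partial_trace_kraus_carrier]]
          adj_partial_trace_kraus_sandwich c_sq del: index_mult_mat(1))
    also have "\<dots> = (if x mod m = y mod m then of_real (s (x mod m)) * X $$ (x div m, y div m) else 0)"
    proof (cases "x mod m = y mod m")
      case True
      then show ?thesis using xy_mod by (simp add: if_distrib[of "\<lambda>v. _ * v"] cong: if_cong)
    next
      case False
      then show ?thesis by (auto intro!: sum.neutral)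
    qed
    also have "\<dots> = kron X (dephase \<tau>) $$ (x,y)"
      using xy X \<tau>_carrier xy_mod by (simp add: \<tau>_diag)
    finally show "kron X (dephase \<tau>) $$ (x,y) = msum (d*m) (d*m) (map (\<lambda>K. K * X * adj K) Ks) $$ (x,y)" ..
  qed (use X \<tau>_carrier in simp_all)
  ultimately show ?thesis unfolding channel_def by blast
qed

lemma DIO_append_dephased:
  assumes \<tau>: "density m \<tau>"
  shows "DIO d (d*m) (\<lambda>X. kron X (dephase \<tau>))"
proof -
  have \<tau>_carrier: "\<tau> \<in> carrier_mat m m" using density_carrier[OF \<tau>] .
  have "dephase (kron X (dephase \<tau>)) = kron (dephase X) (dephase \<tau>)" if "X \<in> carrier_mat d d" for X
    using dephase_kron[OF that dephase_carrier[OF \<tau>_carrier]] by simp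
  then show ?thesis using channel_append_dephased[OF \<tau>] by (simp add: DIO_def)
qed

lemma DIO_remove_ancilla:
  assumes \<tau>: "density m \<tau>" and N': "DIO (d*m) (k*(d*m)) N'"
  shows "DIO d (k*d) (partial_trace (k*d) m \<circ> N' \<circ> (\<lambda>X. kron X (dephase \<tau>)))"
proof -
  have "DIO (d*m) (k*d*m) N'" using N' by (simp add: mult.assoc)
  then have "DIO d (k*d*m) (N' \<circ> (\<lambda>X. kron X (dephase \<tau>)))"
    by (rule DIO_comp[OF DIO_append_dephased[OF \<tau>]])
  then have "DIO d (k*d) (partial_trace (k*d) m \<circ> (N' \<circ> (\<lambda>X. kron X (dephase \<tau>))))"
    by (rule DIO_comp[OF _ DIO_partial_trace])
  then show ?thesis by (simp only: o_assoc)
qed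

lemma density_proj:
  assumes k: "0 < k"
  shows "density k (proj k 0)"
proof -
  have "0 \<le> Re (\<Sum>i<k. \<Sum>j<k. cnj (v $ i) * proj k 0 $$ (i,j) * v $ j)" for v :: "complex vec"
  proof -
    have "(\<Sum>j<k. cnj (v $ i) * proj k 0 $$ (i,j) * v $ j) = (if i = 0 then cnj (v $ 0) * v $ 0 else 0)"
      if "i < k" for i
      using that k by (cases "i = 0")
        (simp_all add: proj_def if_distrib[of "\<lambda>x. _ * x"] if_distrib[of "\<lambda>x. x * _"]
          cong: if_cong)
    then have "(\<Sum>i<k. \<Sum>j<k. cnj (v $ i) * proj k 0 $$ (i,j) * v $ j) = v $ 0 * cnj (v $ 0)"
      using k by (simp add: mult.commute)
    then show ?thesis by (simp add: complex_mult_cnj)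
  qed
  then show ?thesis using k by (auto simp: density_def psd_def proj_def tr_def)
qed

text \<open>Only the output dimension matters here, and \<open>k * e = e * k\<close>: appending an ancilla in the
  state \<open>|0\<rangle>\<langle>0|\<close> will do.\<close>

lemma ex_DIO: "0 < k \<Longrightarrow> \<exists>N. DIO e (k*e) N"
  using DIO_append_dephased[OF density_proj] by (metis mult.commute)

section \<open>Success probability of discrimination\<close>

lemma index_proj_kron:
  assumes "t < k*e" "c < k*e"
  shows "kron (proj k j) (1\<^sub>m e) $$ (t,c) = (if t = c \<and> c div e = j then 1 else 0)"
proof -
  have "0 < e" using assms by (cases e) auto
  moreover have "t div e < k" "c div e < k" using assms by (simp_all add: less_mult_imp_div_less)
  moreover have "t = c \<longleftrightarrow> t div e = c div e \<and> t mod e = c mod e" by (metis div_mult_mod_eq)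
  ultimately show ?thesis using assms by (auto simp: kron_def proj_def)
qed

lemma tr_mult_proj_kron:
  assumes Y: "Y \<in> carrier_mat (k*e) (k*e)"
  shows "tr (Y * kron (proj k j) (1\<^sub>m e)) = (\<Sum>c<k*e. if c div e = j then Y $$ (c,c) else 0)"
proof -
  have "tr (Y * kron (proj k j) (1\<^sub>m e)) = (\<Sum>c<k*e. \<Sum>t<k*e. Y $$ (c,t) * kron (proj k j) (1\<^sub>m e) $$ (t,c))"
    using Y by (simp add: tr_def index_mult_mat_sum proj_def del: index_mult_mat(1))
  also have "\<dots> = (\<Sum>c<k*e. if c div e = j then Y $$ (c,c) else 0)"
    by (intro sum.cong refl) (simp add: index_proj_kron if_distrib[of "\<lambda>x. _ * x"] cong: if_cong)
  finally show ?thesis .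
qed

lemma tr_mult_proj_kron_dephase:
  "Y \<in> carrier_mat (k*e) (k*e) \<Longrightarrow> tr (dephase Y * kron (proj k j) (1\<^sub>m e)) = tr (Y * kron (proj k j) (1\<^sub>m e))"
  by (simp add: tr_mult_proj_kron) (intro sum.cong refl, simp)

lemma tr_mult_proj_kron_partial_trace:
  assumes Y: "Y \<in> carrier_mat (k*(d*m)) (k*(d*m))"
  shows "tr (Y * kron (proj k j) (1\<^sub>m (d*m))) = tr (partial_trace (k*d) m Y * kron (proj k j) (1\<^sub>m d))"
proof -
  have div_eq: "(c*m + a) div (d*m) = c div d" if "a < m" for c a
    using that by (simp add: mult.commute[of d m] div_mult2_eq)
  have "tr (Y * kron (proj k j) (1\<^sub>m (d*m))) = (\<Sum>c<k*d*m. if c div (d*m) = j then Y $$ (c,c) else 0)"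
    by (simp add: tr_mult_proj_kron[OF Y] mult.assoc)
  also have "\<dots> = (\<Sum>c<k*d. \<Sum>a<m. if (c*m + a) div (d*m) = j then Y $$ (c*m + a, c*m + a) else 0)"
    by (rule sum_lessThan_mult_nat)
  also have "\<dots> = (\<Sum>c<k*d. if c div d = j then partial_trace (k*d) m Y $$ (c,c) else 0)"
    by (intro sum.cong refl) (simp add: div_eq partial_trace_def)
  also have "\<dots> = tr (partial_trace (k*d) m Y * kron (proj k j) (1\<^sub>m d))"
    by (rule tr_mult_proj_kron[symmetric]) (simp add: partial_trace_def)
  finally show ?thesis .
qed

definition success_prob ::
  "nat \<Rightarrow> nat \<Rightarrow> (nat \<Rightarrow> real) \<Rightarrow> (nat \<Rightarrow> complex mat) \<Rightarrow> (complex mat \<Rightarrow> complex mat) \<Rightarrow> real" where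
  "success_prob d k p \<rho> N = (\<Sum>j<k. p j * Re (tr (N (\<rho> j) * kron (proj k j) (1\<^sub>m d))))"

lemma Psuc_DIO_eq_Sup: "Psuc_DIO d k p \<rho> = Sup (success_prob d k p \<rho> ` {N. DIO d (k*d) N})"
  unfolding Psuc_DIO_def success_prob_def by (rule arg_cong[where f = Sup]) auto

lemma success_prob_le_one:
  assumes ens: "ensemble d k p \<rho>" and N: "channel d (k*d) N"
  shows "success_prob d k p \<rho> N \<le> 1"
proof -
  have "Re (tr (N (\<rho> j) * kron (proj k j) (1\<^sub>m d))) \<le> 1" if j: "j < k" for j
  proof -
    have \<rho>: "psd d (\<rho> j)" "tr (\<rho> j) = 1" using ens j by (auto simp: ensemble_def density_def)
    then have \<rho>_carrier: "\<rho> j \<in> carrier_mat d d" by (simp add: psd_carrier)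
    have Y: "N (\<rho> j) \<in> carrier_mat (k*d) (k*d)" by (rule channel_carrier[OF N \<rho>_carrier])
    have "Re (tr (N (\<rho> j) * kron (proj k j) (1\<^sub>m d)))
        = (\<Sum>c<k*d. if c div d = j then Re (N (\<rho> j) $$ (c,c)) else 0)"
      by (simp add: tr_mult_proj_kron[OF Y] if_distrib[of Re] cong: if_cong)
    also have "\<dots> \<le> (\<Sum>c<k*d. Re (N (\<rho> j) $$ (c,c)))"
      using channel_diag_nonneg[OF N \<rho>(1)] by (intro sum_mono) auto
    also have "\<dots> = Re (tr (N (\<rho> j)))"
      using Y by (simp add: tr_def)
    also have "\<dots> = 1"
      using \<rho> by (simp add: channel_trace[OF N \<rho>_carrier])
    finally show ?thesis .
  qed
  then have "success_prob d k p \<rho> N \<le> (\<Sum>j<k. p j)"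
    using ens unfolding success_prob_def ensemble_def by (intro sum_mono mult_left_le) auto
  also have "\<dots> = 1" using ens by (simp add: ensemble_def)
  finally show ?thesis .
qed

lemma success_prob_ancilla_eq:
  assumes ens: "ensemble d k p \<rho>" and \<tau>: "density m \<tau>" and N': "DIO (d*m) (k*(d*m)) N'"
  shows "success_prob (d*m) k p (\<lambda>j. kron (\<rho> j) \<tau>) N'
    = success_prob d k p \<rho> (partial_trace (k*d) m \<circ> N' \<circ> (\<lambda>X. kron X (dephase \<tau>)))"
proof -
  have \<tau>_carrier: "\<tau> \<in> carrier_mat m m" using density_carrier[OF \<tau>] .
  have N'_eq: "\<forall>X\<in>carrier_mat (d*m) (d*m). dephase (N' X) = N' (dephase X)"
    and N'_channel: "channel (d*m) (k*(d*m)) N'"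
    using N' unfolding DIO_def by blast+
  have "tr (N' (kron (\<rho> j) \<tau>) * kron (proj k j) (1\<^sub>m (d*m)))
      = tr (partial_trace (k*d) m (N' (kron (\<rho> j) (dephase \<tau>))) * kron (proj k j) (1\<^sub>m d))"
    if "j < k" for j
  proof -
    have \<rho>: "\<rho> j \<in> carrier_mat d d"
      using ens that density_carrier unfolding ensemble_def by blast
    have in_carrier: "kron (\<rho> j) \<tau> \<in> carrier_mat (d*m) (d*m)" "kron (\<rho> j) (dephase \<tau>) \<in> carrier_mat (d*m) (d*m)"
      using \<rho> \<tau>_carrier by simp_all
    have out_carrier: "N' X \<in> carrier_mat (k*(d*m)) (k*(d*m))" if "X \<in> carrier_mat (d*m) (d*m)" for X
      by (rule channel_carrier[OF N'_channel that])
    have "dephase (N' (kron (\<rho> j) \<tau>)) = N' (kron (dephase (\<rho> j)) (dephase \<tau>))"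
      using N'_eq in_carrier \<rho> \<tau>_carrier by (simp add: dephase_kron)
    also have "\<dots> = dephase (N' (kron (\<rho> j) (dephase \<tau>)))"
      using N'_eq in_carrier by (simp add: dephase_kron[OF \<rho> dephase_carrier[OF \<tau>_carrier]])
    finally have same_diag: "dephase (N' (kron (\<rho> j) \<tau>)) = dephase (N' (kron (\<rho> j) (dephase \<tau>)))" .
    show ?thesis
      using tr_mult_proj_kron_dephase[OF out_carrier[OF in_carrier(1)], of j]
        tr_mult_proj_kron_dephase[OF out_carrier[OF in_carrier(2)], of j]
        tr_mult_proj_kron_partial_trace[OF out_carrier[OF in_carrier(2)], of j]
      by (simp add: same_diag)
  qed
  then show ?thesis by (simp add: success_prob_def)
qed

theorem proposition2:
  fixes d k m :: nat and p :: "nat \<Rightarrow> real" and \<rho> :: "nat \<Rightarrow> complex mat" and \<tau> :: "complex mat"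
  assumes "ensemble d k p \<rho>"
    and "density m \<tau>"
  shows "Psuc_DIO (d * m) k p (\<lambda>j. kron (\<rho> j) \<tau>) \<le> Psuc_DIO d k p \<rho>"
  unfolding Psuc_DIO_eq_Sup
proof (rule cSup_mono)
  have "0 < k" using assms(1) by (simp add: ensemble_def)
  then show "success_prob (d*m) k p (\<lambda>j. kron (\<rho> j) \<tau>) ` {N. DIO (d*m) (k*(d*m)) N} \<noteq> {}"
    using ex_DIO by blast
  show "bdd_above (success_prob d k p \<rho> ` {N. DIO d (k*d) N})"
    using success_prob_le_one[OF assms(1)] by (auto simp: DIO_def intro!: bdd_aboveI2)
  fix b assume "b \<in> success_prob (d*m) k p (\<lambda>j. kron (\<rho> j) \<tau>) ` {N. DIO (d*m) (k*(d*m)) N}"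
  then obtain N' where "DIO (d*m) (k*(d*m)) N'" and "b = success_prob (d*m) k p (\<lambda>j. kron (\<rho> j) \<tau>) N'"
    by blast
  then show "\<exists>a\<in>success_prob d k p \<rho> ` {N. DIO d (k*d) N}. b \<le> a"
    using success_prob_ancilla_eq[OF assms] DIO_remove_ancilla[OF assms(2)] by blast
qed

end
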